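(* Let $k\in\mathbb N^+$, $n\ge 2$, $\mathbf C=(c_0,\dots,c_k)\in\{0,1\}^{k+1}$ with $\mathbf C\neq(0,\dots,0)$. Define the polynomials $$x_{\mathbf C}^{n\uparrow}=x\prod_{j=2}^{n}\big((j-1)^kF_j(\mathbf C)x+(j-1)^kF_j(\mathbf C')\big),\qquad x_{\mathbf C}^{n\downarrow}=x\prod_{j=2}^{n}\big((j-1)^kF_j(\mathbf C)x-(j-1)^kF_j(\mathbf C')\big),$$ and $O^u_{\mathbf C}(n,m)=O_{\mathbf C}(n,m+c_k-1)$, $O^s_{\mathbf C}(n,m)=(-1)^{n+m}O_{\mathbf C}(n,m+c_k-1)$. Then $$x_{\mathbf C}^{n\uparrow}=\sum_{m=0}^nO^u_{\mathbf C}(n,m)x^m,\qquad x_{\mathbf C}^{n\downarrow}=\sum_{m=0}^nO^s_{\mathbf C}(n,m)x^m;$$ the zeros of $x_{\mathbf C}^{n\uparrow}$ are $x=0$ and $x=-F_j(\mathbf C')/F_j(\mathbf C)$ for $j=2,\dots,n$, and the zeros of $x_{\mathbf C}^{n\downarrow}$ are $x=0$ and $x=F_j(\mathbf C')/F_j(\mathbf C)$ for $j=2,\dots,n$.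
   Context: Put $\mathbf C'=(1,\dots,1)-\mathbf C$. Consider $k$-tuples $(\pi_1,\dots,\pi_k)$ of permutations of $\{1,\dots,n\}$. A position $\alpha$ is a record of a permutation $\pi$ if $\pi(\alpha)<\pi(\alpha')$ for every $\alpha'<\alpha$ (position $1$ is always a record). For a tuple, let $l_\alpha$ be the number of $\beta\in\{1,\dots,k\}$ for which $\alpha$ is a record of $\pi_\beta$. The $\mathbf C$ sequential optimization set is $S=\{\alpha:c_{l_\alpha}=1\}$, with weight $|S|$; for an integer $m$, $O_{\mathbf C}(n,m)$ is the number of $k$-tuples whose weight equals $m$. For $j\ge2$ and $X=(x_0,\dots,x_k)\in\mathbb R^{k+1}$, $F_j(X)=\sum_{\beta=0}^k\binom{k}{\beta}\frac{x_\beta}{(j-1)^\beta}$. *)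

theory Defs
  imports Complex_Main "HOL-Combinatorics.Permutations" "HOL-Computational_Algebra.Polynomial"
begin

definition is_record :: "(nat \<Rightarrow> nat) \<Rightarrow> nat \<Rightarrow> bool" where
  "is_record p a \<longleftrightarrow> (\<forall>a'\<in>{1..<a}. p a < p a')"

definition perm_tuples :: "nat \<Rightarrow> nat \<Rightarrow> (nat \<Rightarrow> nat \<Rightarrow> nat) set" where
  "perm_tuples n k = Pi\<^sub>E {1..k} (\<lambda>_. {p. p permutes {1..n}})"

definition rec_count :: "nat \<Rightarrow> (nat \<Rightarrow> nat \<Rightarrow> nat) \<Rightarrow> nat \<Rightarrow> nat" where
  "rec_count k pis a = card {b\<in>{1..k}. is_record (pis b) a}"

text \<open>C sequential optimization set; C is given as c : nat => nat, c i for i = 0..k.\<close>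
definition seq_opt_set :: "nat \<Rightarrow> nat \<Rightarrow> (nat \<Rightarrow> nat) \<Rightarrow> (nat \<Rightarrow> nat \<Rightarrow> nat) \<Rightarrow> nat set" where
  "seq_opt_set n k c pis = {a\<in>{1..n}. c (rec_count k pis a) = 1}"

definition O_C :: "nat \<Rightarrow> nat \<Rightarrow> (nat \<Rightarrow> nat) \<Rightarrow> int \<Rightarrow> nat" where
  "O_C n k c m = card {pis\<in>perm_tuples n k. int (card (seq_opt_set n k c pis)) = m}"

definition compl_C :: "(nat \<Rightarrow> nat) \<Rightarrow> nat \<Rightarrow> nat" where
  "compl_C c i = 1 - c i"

definition F :: "nat \<Rightarrow> nat \<Rightarrow> (nat \<Rightarrow> real) \<Rightarrow> real" where
  "F k j X = (\<Sum>b=0..k. real (k choose b) * X b / (real j - 1) ^ b)"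

definition x_up :: "nat \<Rightarrow> nat \<Rightarrow> (nat \<Rightarrow> nat) \<Rightarrow> real poly" where
  "x_up n k c = [:0, 1:] * (\<Prod>j\<in>{2..n}.
     [: (real j - 1) ^ k * F k j (\<lambda>i. real (compl_C c i)),
        (real j - 1) ^ k * F k j (\<lambda>i. real (c i)) :])"

definition x_down :: "nat \<Rightarrow> nat \<Rightarrow> (nat \<Rightarrow> nat) \<Rightarrow> real poly" where
  "x_down n k c = [:0, 1:] * (\<Prod>j\<in>{2..n}.
     [: - ((real j - 1) ^ k * F k j (\<lambda>i. real (compl_C c i))),
        (real j - 1) ^ k * F k j (\<lambda>i. real (c i)) :])"

definition O_u :: "nat \<Rightarrow> nat \<Rightarrow> (nat \<Rightarrow> nat) \<Rightarrow> nat \<Rightarrow> int" where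
  "O_u n k c m = int (O_C n k c (int m + int (c k) - 1))"

definition O_s :: "nat \<Rightarrow> nat \<Rightarrow> (nat \<Rightarrow> nat) \<Rightarrow> nat \<Rightarrow> int" where
  "O_s n k c m = (-1) ^ (n + m) * int (O_C n k c (int m + int (c k) - 1))"

end

theory Submission
  imports Defs
begin

text \<open>Let G_n(x) be the sum of x^|S| over all k-tuples of permutations of {1..n}.
  Every permutation of {1..n+1} arises exactly once from a permutation of {1..n} by appending
  a last value v and raising the old values \<ge> v by one. This keeps the records among the first
  n positions, and position n+1 becomes a record iff v = 1. Among the (n+1)^k choices of last
  values for a tuple, exactly (k choose l) n^(k-l) contain l ones, so G_(n+1) = G_n (B_n + A_n x)
  with A_n = \<Sum>_l (k choose l) n^(k-l) c_l = n^k F_(n+1)(C) and B_n the same for C'. The factor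
  for n = 0 is x^(c_k), whence x^(c_k) x_C^(n up) = x G_n: this gives the coefficients of
  x_C^(n up), and those of x_C^(n down)(x) = (-1)^n x_C^(n up)(-x) follow. The zeros are read
  off the linear factors, since F_j(C) > 0.\<close>

lemma bij_betw_PiE_pairs:
  assumes bij: "bij_betw (\<lambda>(x, y). f x y) (A \<times> B) C"
  shows "bij_betw (\<lambda>(xs, ys). \<lambda>i\<in>I. f (xs i) (ys i))
           (Pi\<^sub>E I (\<lambda>_. A) \<times> Pi\<^sub>E I (\<lambda>_. B)) (Pi\<^sub>E I (\<lambda>_. C))"
proof -
  define g where "g = inv_into (A \<times> B) (\<lambda>(x, y). f x y)"
  have g_f: "g (f x y) = (x, y)" if "x \<in> A" "y \<in> B" for x y
    using bij_betw_inv_into_left[OF bij, of "(x, y)"] that by (simp add: g_def)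
  have f_g: "g z \<in> A \<times> B" "f (fst (g z)) (snd (g z)) = z" if "z \<in> C" for z
    using bij_betw_inv_into_right[OF bij that] bij_betw_apply[OF bij_betw_inv_into[OF bij] that]
    by (auto simp: g_def split: prod.splits)
  let ?F = "\<lambda>(xs, ys). \<lambda>i\<in>I. f (xs i) (ys i)"
  let ?G = "\<lambda>zs. (\<lambda>i\<in>I. fst (g (zs i)), \<lambda>i\<in>I. snd (g (zs i)))"
  show ?thesis
  proof (rule bij_betw_byWitness[where f' = ?G])
    show "\<forall>p \<in> Pi\<^sub>E I (\<lambda>_. A) \<times> Pi\<^sub>E I (\<lambda>_. B). ?G (?F p) = p"
      by (auto simp: g_f PiE_iff extensional_def fun_eq_iff)
    show "\<forall>zs \<in> Pi\<^sub>E I (\<lambda>_. C). ?F (?G zs) = zs"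
      by (auto simp: f_g PiE_iff extensional_def fun_eq_iff)
    show "?F ` (Pi\<^sub>E I (\<lambda>_. A) \<times> Pi\<^sub>E I (\<lambda>_. B)) \<subseteq> Pi\<^sub>E I (\<lambda>_. C)"
      using bij_betw_apply[OF bij] by (auto simp: PiE_iff)
    show "?G ` Pi\<^sub>E I (\<lambda>_. C) \<subseteq> Pi\<^sub>E I (\<lambda>_. A) \<times> Pi\<^sub>E I (\<lambda>_. B)"
      using f_g(1) by (auto simp: PiE_iff mem_Times_iff)
  qed
qed

lemma sum_PiE_monom_count_ones:
  assumes "finite I"
  shows "(\<Sum>vs\<in>Pi\<^sub>E I (\<lambda>_. {1..Suc j}). monom (1 :: 'a :: comm_semiring_1) (card {i\<in>I. vs i = 1}))
    = [:of_nat j, 1:] ^ card I"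
proof -
  have monom_eq: "monom (1 :: 'a) (card {i\<in>I. vs i = 1}) = (\<Prod>i\<in>I. if vs i = 1 then [:0, 1:] else 1)" for vs
    using assms by (simp add: monom_altdef prod.inter_filter[symmetric])
  have "(\<Sum>v\<in>{1..Suc j}. if v = 1 then [:0, 1:] else 1) = [:0, 1:] + (\<Sum>v\<in>{2..Suc j}. 1 :: 'a poly)"
    by (subst sum.atLeast_Suc_atMost) simp_all
  also have "\<dots> = [:of_nat j, 1:]"
    by (simp add: of_nat_poly one_pCons)
  finally have factor: "(\<Sum>v\<in>{1..Suc j}. if v = 1 then [:0, 1:] else 1) = [:of_nat j, 1 :: 'a:]" .
  have "(\<Sum>vs\<in>Pi\<^sub>E I (\<lambda>_. {1..Suc j}). \<Prod>i\<in>I. if vs i = 1 then [:0, 1:] else 1)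
      = (\<Prod>i\<in>I. \<Sum>v\<in>{1..Suc j}. if v = 1 then [:0, 1:] else (1 :: 'a poly))"
    by (rule prod_sum_PiE[symmetric]) (simp_all add: assms)
  then show ?thesis
    by (simp only: monom_eq factor prod_constant)
qed

lemma card_PiE_count_ones:
  assumes "finite I" and "l \<le> card I"
  shows "card {vs\<in>Pi\<^sub>E I (\<lambda>_. {1..Suc j}). card {i\<in>I. vs i = 1} = l} = (card I choose l) * j ^ (card I - l)"
proof -
  have "card {vs\<in>Pi\<^sub>E I (\<lambda>_. {1..Suc j}). card {i\<in>I. vs i = 1} = l}
      = coeff (\<Sum>vs\<in>Pi\<^sub>E I (\<lambda>_. {1..Suc j}). monom (1 :: nat) (card {i\<in>I. vs i = 1})) l"
    by (simp add: coeff_sum coeff_monom sum.If_cases[OF finite_PiE] assms(1) Int_def)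
  also have "\<dots> = (card I choose l) * j ^ (card I - l)"
    by (subst sum_PiE_monom_count_ones[OF assms(1)]) (simp add: coeff_linear_poly_power assms(2))
  finally show ?thesis .
qed

lemma sum_PiE_count_ones:
  fixes g :: "nat \<Rightarrow> 'a :: comm_semiring_1"
  assumes "finite I"
  shows "(\<Sum>vs\<in>Pi\<^sub>E I (\<lambda>_. {1..Suc j}). g (card {i\<in>I. vs i = 1}))
    = (\<Sum>l\<le>card I. of_nat ((card I choose l) * j ^ (card I - l)) * g l)"
proof -
  let ?V = "Pi\<^sub>E I (\<lambda>_. {1..Suc j})" and ?ones = "\<lambda>vs. card {i\<in>I. vs i = 1}"
  have "(\<Sum>vs\<in>?V. g (?ones vs)) = (\<Sum>l\<le>card I. \<Sum>vs\<in>{vs\<in>?V. ?ones vs = l}. g (?ones vs))"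
    using assms by (intro sum.group[symmetric]) (auto intro: card_mono finite_PiE)
  also have "\<dots> = (\<Sum>l\<le>card I. of_nat (card {vs\<in>?V. ?ones vs = l}) * g l)"
  proof (intro sum.cong refl)
    fix l
    have "(\<Sum>vs\<in>{vs\<in>?V. ?ones vs = l}. g (?ones vs)) = (\<Sum>vs\<in>{vs\<in>?V. ?ones vs = l}. g l)"
      by (rule sum.cong) auto
    then show "(\<Sum>vs\<in>{vs\<in>?V. ?ones vs = l}. g (?ones vs)) = of_nat (card {vs\<in>?V. ?ones vs = l}) * g l"
      by simp
  qed
  also have "\<dots> = (\<Sum>l\<le>card I. of_nat ((card I choose l) * j ^ (card I - l)) * g l)"
    by (intro sum.cong refl) (simp only: atMost_iff card_PiE_count_ones[OF assms])
  finally show ?thesis .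
qed

lemma sum_pCons_pCons: "(\<Sum>i\<in>A. [:a i, b i:]) = [:\<Sum>i\<in>A. a i, \<Sum>i\<in>A. b i:]"
  by (induction A rule: infinite_finite_induct) simp_all

lemma poly_x_mult_prod_reflect:
  fixes a b :: "'b \<Rightarrow> 'a :: comm_ring_1"
  assumes "finite J"
  shows "poly ([:0, 1:] * (\<Prod>j\<in>J. [:- b j, a j:])) x
    = (-1) ^ Suc (card J) * poly ([:0, 1:] * (\<Prod>j\<in>J. [:b j, a j:])) (- x)"
proof -
  have "(\<Prod>j\<in>J. b j + - x * a j) = (-1) ^ card J * (\<Prod>j\<in>J. - b j + x * a j)"
    using prod_uminus[of "\<lambda>j. - b j + x * a j" J] by simp
  then show ?thesis
    by (simp add: poly_prod) (metis left_minus_one_mult_self mult.left_commute)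
qed

lemma poly_sum_monom_reflect:
  fixes a :: "nat \<Rightarrow> 'a :: comm_ring_1"
  shows "(-1) ^ n * poly (\<Sum>m=0..n. monom (a m) m) (- x)
    = poly (\<Sum>m=0..n. monom ((-1) ^ (n + m) * a m) m) x"
  unfolding poly_sum poly_monom sum_distrib_left
proof (intro sum.cong refl)
  fix m
  have "(- x) ^ m = (-1) ^ m * x ^ m"
    by (rule power_minus)
  then show "(-1) ^ n * (a m * (- x) ^ m) = (-1) ^ (n + m) * a m * x ^ m"
    by (simp only: power_add mult_ac)
qed

lemma roots_x_mult_prod:
  fixes a b :: "'b \<Rightarrow> 'a :: field"
  assumes "finite J" and "\<And>j. j \<in> J \<Longrightarrow> a j \<noteq> 0"
  shows "{x. poly ([:0, 1:] * (\<Prod>j\<in>J. [:b j, a j:])) x = 0} = insert 0 ((\<lambda>j. - b j / a j) ` J)"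
proof -
  have "b j + x * a j = 0 \<longleftrightarrow> x = - b j / a j" if "j \<in> J" for j x
    using assms(2)[OF that] by (subst eq_divide_eq) (auto simp: add_eq_0_iff)
  then show ?thesis
    using assms(1) by (auto simp: poly_prod prod_zero_iff)
qed

definition bump :: "nat \<Rightarrow> nat \<Rightarrow> nat" where
  "bump v y = (if v \<le> y then Suc y else y)"

definition perm_snoc :: "nat \<Rightarrow> (nat \<Rightarrow> nat) \<Rightarrow> nat \<Rightarrow> nat \<Rightarrow> nat" where
  "perm_snoc n q v a = (if a \<in> {1..n} then bump v (q a) else if a = Suc n then v else a)"

lemma bump_less_iff [simp]: "bump v x < bump v y \<longleftrightarrow> x < y"
  by (auto simp: bump_def)

lemma bump_eq_iff [simp]: "bump v x = bump v y \<longleftrightarrow> x = y"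
  by (auto simp: bump_def)

lemma bump_neq [simp]: "bump v x \<noteq> v"
  by (auto simp: bump_def)

lemma perm_snoc_permutes:
  assumes q: "q permutes {1..n}" and v: "v \<in> {1..Suc n}"
  shows "perm_snoc n q v permutes {1..Suc n}"
proof (rule bij_imp_permutes)
  have eval: "perm_snoc n q v a = (if a = Suc n then v else bump v (q a))"
    if "a \<in> {1..Suc n}" for a
    using that by (auto simp: perm_snoc_def)
  have "perm_snoc n q v a \<in> {1..Suc n}" if a: "a \<in> {1..Suc n}" for a
  proof (cases "a = Suc n")
    case False
    then have "q a \<in> {1..n}"
      using a permutes_in_image[OF q] by simp
    then show ?thesis
      using eval[OF a] False by (auto simp: bump_def)
  qed (use v in \<open>simp add: perm_snoc_def\<close>)
  moreover have "inj_on (perm_snoc n q v) {1..Suc n}"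
  proof (rule inj_onI)
    fix a b assume a: "a \<in> {1..Suc n}" and b: "b \<in> {1..Suc n}"
      and eq: "perm_snoc n q v a = perm_snoc n q v b"
    show "a = b"
      using eq eval[OF a] eval[OF b] injD[OF permutes_inj[OF q]]
      by (cases "a = Suc n"; cases "b = Suc n") (auto dest: sym)
  qed
  ultimately show "bij_betw (perm_snoc n q v) {1..Suc n} {1..Suc n}"
    by (simp add: bij_betw_def endo_inj_surj image_subset_iff)
qed (auto simp: perm_snoc_def)

lemma perm_snoc_eq_iff:
  assumes "q permutes {1..n}" and "q' permutes {1..n}"
  shows "perm_snoc n q v = perm_snoc n q' v' \<longleftrightarrow> q = q' \<and> v = v'"
proof
  assume eq: "perm_snoc n q v = perm_snoc n q' v'"
  have "v = v'"
    using fun_cong[OF eq, of "Suc n"] by (simp add: perm_snoc_def)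
  moreover have "q a = q' a" for a
  proof (cases "a \<in> {1..n}")
    case True
    then show ?thesis
      using fun_cong[OF eq, of a] \<open>v = v'\<close> by (simp add: perm_snoc_def)
  next
    case False
    then show ?thesis
      using assms by (simp add: permutes_not_in)
  qed
  ultimately show "q = q' \<and> v = v'" by auto
qed simp

lemma bij_betw_perm_snoc:
  "bij_betw (\<lambda>(q, v). perm_snoc n q v)
     ({q. q permutes {1..n}} \<times> {1..Suc n}) {p. p permutes {1..Suc n}}"
proof -
  let ?f = "\<lambda>(q, v). perm_snoc n q v" and ?A = "{q. q permutes {1..n}} \<times> {1..Suc n}"
  have inj: "inj_on ?f ?A"
    by (rule inj_onI) (auto simp: perm_snoc_eq_iff)
  have "?f ` ?A \<subseteq> {p. p permutes {1..Suc n}}"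
    using perm_snoc_permutes by auto
  moreover have "card (?f ` ?A) = card {p. p permutes {1..Suc n}}"
    by (subst card_image[OF inj]) (simp add: card_cartesian_product card_permutations)
  ultimately have "?f ` ?A = {p. p permutes {1..Suc n}}"
    by (intro card_subset_eq) (auto simp: finite_permutations)
  with inj show ?thesis
    by (simp add: bij_betw_def)
qed

lemma is_record_perm_snoc:
  assumes "a \<le> n"
  shows "is_record (perm_snoc n q v) a \<longleftrightarrow> is_record q a"
  unfolding is_record_def using assms by (intro ball_cong) (auto simp: perm_snoc_def)

lemma is_record_perm_snoc_last:
  assumes q: "q permutes {1..n}" and v: "v \<in> {1..Suc n}"
  shows "is_record (perm_snoc n q v) (Suc n) \<longleftrightarrow> v = 1"
proof
  assume rec: "is_record (perm_snoc n q v) (Suc n)"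
  show "v = 1"
  proof (rule ccontr)
    assume "v \<noteq> 1"
    with v have "1 \<in> q ` {1..n}"
      using permutes_image[OF q] by auto
    then obtain a where a: "a \<in> {1..n}" "q a = 1"
      by (metis imageE)
    then have "perm_snoc n q v a = 1"
      using \<open>v \<noteq> 1\<close> v by (simp add: perm_snoc_def bump_def)
    moreover have "perm_snoc n q v (Suc n) < perm_snoc n q v a"
      using rec a by (simp add: is_record_def)
    ultimately show False
      using v by (simp add: perm_snoc_def)
  qed
next
  assume "v = 1"
  show "is_record (perm_snoc n q v) (Suc n)"
    unfolding is_record_def
  proof
    fix a assume "a \<in> {1..<Suc n}"
    then have "a \<in> {1..n}" "q a \<in> {1..n}"
      using permutes_in_image[OF q] by auto
    then show "perm_snoc n q v (Suc n) < perm_snoc n q v a"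
      using \<open>v = 1\<close> by (simp add: perm_snoc_def bump_def)
  qed
qed

definition perms_snoc :: "nat \<Rightarrow> nat \<Rightarrow> (nat \<Rightarrow> nat \<Rightarrow> nat) \<Rightarrow> (nat \<Rightarrow> nat) \<Rightarrow> nat \<Rightarrow> nat \<Rightarrow> nat" where
  "perms_snoc n k qs vs = (\<lambda>b\<in>{1..k}. perm_snoc n (qs b) (vs b))"

lemma bij_betw_perms_snoc:
  "bij_betw (\<lambda>(qs, vs). perms_snoc n k qs vs)
     (perm_tuples n k \<times> Pi\<^sub>E {1..k} (\<lambda>_. {1..Suc n})) (perm_tuples (Suc n) k)"
  unfolding perm_tuples_def perms_snoc_def
  by (rule bij_betw_PiE_pairs[OF bij_betw_perm_snoc])

lemma rec_count_perms_snoc: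
  assumes "a \<le> n"
  shows "rec_count k (perms_snoc n k qs vs) a = rec_count k qs a"
  unfolding rec_count_def perms_snoc_def
  using assms by (intro arg_cong[where f = card] Collect_cong conj_cong refl)
    (simp_all add: is_record_perm_snoc)

lemma rec_count_perms_snoc_last:
  assumes "qs \<in> perm_tuples n k" and "vs \<in> Pi\<^sub>E {1..k} (\<lambda>_. {1..Suc n})"
  shows "rec_count k (perms_snoc n k qs vs) (Suc n) = card {b\<in>{1..k}. vs b = 1}"
  unfolding rec_count_def perms_snoc_def
  using assms by (intro arg_cong[where f = card] Collect_cong)
    (auto simp: perm_tuples_def PiE_iff is_record_perm_snoc_last)

lemma card_seq_opt_set_perms_snoc:
  assumes "qs \<in> perm_tuples n k" and "vs \<in> Pi\<^sub>E {1..k} (\<lambda>_. {1..Suc n})"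
  shows "card (seq_opt_set (Suc n) k c (perms_snoc n k qs vs)) =
    card (seq_opt_set n k c qs) + (if c (card {b\<in>{1..k}. vs b = 1}) = 1 then 1 else 0)"
proof -
  have "seq_opt_set (Suc n) k c (perms_snoc n k qs vs) =
      seq_opt_set n k c qs \<union> (if c (card {b\<in>{1..k}. vs b = 1}) = 1 then {Suc n} else {})"
    using rec_count_perms_snoc rec_count_perms_snoc_last[OF assms]
    by (auto simp: seq_opt_set_def le_Suc_eq)
  moreover have "finite (seq_opt_set n k c qs)" "Suc n \<notin> seq_opt_set n k c qs"
    by (auto simp: seq_opt_set_def)
  ultimately show ?thesis
    by simp
qed

definition weight_poly :: "nat \<Rightarrow> nat \<Rightarrow> (nat \<Rightarrow> nat) \<Rightarrow> real poly" where
  "weight_poly n k c = (\<Sum>pis\<in>perm_tuples n k. monom 1 (card (seq_opt_set n k c pis)))"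

lemma coeff_weight_poly: "coeff (weight_poly n k c) m = real (O_C n k c (int m))"
  by (simp add: weight_poly_def O_C_def coeff_sum coeff_monom perm_tuples_def
      sum.If_cases[OF finite_PiE] finite_permutations Int_def)

lemma weight_poly_0: "weight_poly 0 k c = 1"
  by (simp add: weight_poly_def seq_opt_set_def perm_tuples_def card_PiE)

lemma weight_poly_Suc:
  "weight_poly (Suc n) k c = weight_poly n k c *
     (\<Sum>vs\<in>Pi\<^sub>E {1..k} (\<lambda>_. {1..Suc n}). monom 1 (if c (card {b\<in>{1..k}. vs b = 1}) = 1 then 1 else 0))"
proof -
  let ?V = "Pi\<^sub>E {1..k} (\<lambda>_. {1..Suc n})"
  have "weight_poly (Suc n) k c =
      (\<Sum>(qs, vs)\<in>perm_tuples n k \<times> ?V. monom 1 (card (seq_opt_set (Suc n) k c (perms_snoc n k qs vs))))"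
    unfolding weight_poly_def
    by (subst sum.reindex_bij_betw[OF bij_betw_perms_snoc, symmetric]) (simp add: case_prod_unfold)
  also have "\<dots> = (\<Sum>(qs, vs)\<in>perm_tuples n k \<times> ?V. monom 1 (card (seq_opt_set n k c qs)) *
      monom 1 (if c (card {b\<in>{1..k}. vs b = 1}) = 1 then 1 else 0))"
    by (intro sum.cong refl) (auto simp: card_seq_opt_set_perms_snoc mult_monom)
  also have "\<dots> = weight_poly n k c *
      (\<Sum>vs\<in>?V. monom 1 (if c (card {b\<in>{1..k}. vs b = 1}) = 1 then 1 else 0))"
    by (simp add: weight_poly_def sum_product sum.cartesian_product)
  finally show ?thesis .
qed

definition binom_sum :: "nat \<Rightarrow> nat \<Rightarrow> (nat \<Rightarrow> real) \<Rightarrow> real" where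
  "binom_sum k j X = (\<Sum>l\<le>k. real (k choose l) * real j ^ (k - l) * X l)"

definition step_poly :: "nat \<Rightarrow> (nat \<Rightarrow> nat) \<Rightarrow> nat \<Rightarrow> real poly" where
  "step_poly k c j = [:binom_sum k j (\<lambda>i. real (compl_C c i)), binom_sum k j (\<lambda>i. real (c i)):]"

lemma sum_PiE_eq_step_poly:
  assumes c01: "\<forall>i\<le>k. c i \<in> {0, 1}"
  shows "(\<Sum>vs\<in>Pi\<^sub>E {1..k} (\<lambda>_. {1..Suc j}). monom 1 (if c (card {b\<in>{1..k}. vs b = 1}) = 1 then 1 else 0))
    = step_poly k c j"
proof -
  have "(\<Sum>vs\<in>Pi\<^sub>E {1..k} (\<lambda>_. {1..Suc j}). monom 1 (if c (card {b\<in>{1..k}. vs b = 1}) = 1 then 1 else 0))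
      = (\<Sum>l\<le>k. of_nat ((k choose l) * j ^ (k - l)) * monom (1 :: real) (if c l = 1 then 1 else 0))"
    using sum_PiE_count_ones[of "{1..k}"] by simp
  also have "\<dots> = (\<Sum>l\<le>k. [:real (k choose l) * real j ^ (k - l) * real (compl_C c l),
                            real (k choose l) * real j ^ (k - l) * real (c l):])"
    using c01 by (intro sum.cong refl) (auto simp: compl_C_def of_nat_poly monom_Suc)
  also have "\<dots> = step_poly k c j"
    by (simp only: sum_pCons_pCons step_poly_def binom_sum_def)
  finally show ?thesis .
qed

lemma weight_poly_eq_prod:
  assumes "\<forall>i\<le>k. c i \<in> {0, 1}"
  shows "weight_poly n k c = (\<Prod>j<n. step_poly k c j)"
proof (induction n)
  case 0
  then show ?case
    by (simp add: weight_poly_0)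
next
  case (Suc n)
  then show ?case
    by (simp only: weight_poly_Suc sum_PiE_eq_step_poly[OF assms] prod.lessThan_Suc)
qed

lemma binom_sum_0: "binom_sum k 0 X = X k"
proof -
  have "binom_sum k 0 X = (\<Sum>l\<le>k. if l = k then X k else 0)"
    unfolding binom_sum_def by (rule sum.cong) (auto simp: power_0_left)
  then show ?thesis
    by simp
qed

lemma step_poly_0:
  assumes "c k \<in> {0, 1}"
  shows "step_poly k c 0 = monom 1 (c k)"
  using assms by (auto simp: step_poly_def binom_sum_0 compl_C_def monom_Suc)

lemma binom_sum_eq_F:
  assumes "2 \<le> j"
  shows "(real j - 1) ^ k * F k j X = binom_sum k (j - 1) X"
proof -
  have j: "real j - 1 = real (j - 1)" "real (j - 1) \<noteq> 0"
    using assms by auto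
  have "(real j - 1) ^ k * F k j X
      = (\<Sum>l\<le>k. real (k choose l) * X l * (real (j - 1) ^ k / real (j - 1) ^ l))"
    by (simp add: F_def j(1) sum_distrib_left atLeast0AtMost mult_ac)
  also have "\<dots> = binom_sum k (j - 1) X"
    unfolding binom_sum_def using j(2) by (intro sum.cong refl) (simp add: power_diff)
  finally show ?thesis .
qed

lemma F_pos:
  assumes "2 \<le> j" and "\<forall>i\<le>k. 0 \<le> X i" and "\<exists>i\<le>k. 0 < X i"
  shows "0 < F k j X"
proof -
  obtain i where "i \<le> k" "0 < X i"
    using assms(3) by blast
  moreover have "real j - 1 > 0"
    using assms(1) by simp
  ultimately show ?thesis
    unfolding F_def using assms(2) by (intro sum_pos2[of _ i]) auto
qed

lemma x_up_eq_prod: "x_up n k c = [:0, 1:] * (\<Prod>j\<in>{1..<n}. step_poly k c j)"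
proof -
  have "x_up n k c = [:0, 1:] * (\<Prod>j\<in>Suc ` {1..<n}. step_poly k c (j - 1))"
    unfolding x_up_def step_poly_def
    by (intro arg_cong2[where f = "(*)"] prod.cong) (auto simp: binom_sum_eq_F)
  also have "\<dots> = [:0, 1:] * (\<Prod>j\<in>{1..<n}. step_poly k c j)"
    by (simp add: prod.reindex del: image_Suc_atLeastLessThan)
  finally show ?thesis .
qed

lemma x_up_mult_weight:
  assumes "\<forall>i\<le>k. c i \<in> {0, 1}" and "n \<ge> 1"
  shows "monom 1 (c k) * x_up n k c = [:0, 1:] * weight_poly n k c"
proof -
  have "{..<n} = insert 0 {1..<n}"
    using assms(2) by auto
  then have "weight_poly n k c = monom 1 (c k) * (\<Prod>j\<in>{1..<n}. step_poly k c j)"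
    using assms(1) by (simp add: weight_poly_eq_prod step_poly_0)
  then show ?thesis
    by (simp add: x_up_eq_prod mult_ac)
qed

lemma coeff_x_up:
  assumes "\<forall>i\<le>k. c i \<in> {0, 1}" and "n \<ge> 1"
  shows "coeff (x_up n k c) m = real_of_int (O_u n k c m)"
proof -
  have "coeff (x_up n k c) m = coeff (monom 1 (c k) * x_up n k c) (m + c k)"
    by (simp add: coeff_monom_mult)
  also have "\<dots> = coeff (pCons 0 (weight_poly n k c)) (m + c k)"
    by (simp add: x_up_mult_weight[OF assms])
  also have "\<dots> = real_of_int (O_u n k c m)"
  proof (cases "m + c k")
    case 0
    have "{pis\<in>perm_tuples n k. int (card (seq_opt_set n k c pis)) = -1} = {}"
      by auto
    with 0 show ?thesis
      by (simp add: O_u_def O_C_def)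
  next
    case (Suc i)
    then have "int m + int (c k) - 1 = int i"
      by simp
    then show ?thesis
      unfolding Suc by (simp add: O_u_def coeff_weight_poly)
  qed
  finally show ?thesis .
qed

lemma degree_x_up:
  assumes "n \<ge> 1"
  shows "degree (x_up n k c) \<le> n"
proof -
  let ?f = "\<lambda>j. [:(real j - 1) ^ k * F k j (\<lambda>i. real (compl_C c i)),
                   (real j - 1) ^ k * F k j (\<lambda>i. real (c i)):]"
  have "degree (\<Prod>j\<in>{2..n}. ?f j) \<le> (\<Sum>j\<in>{2..n}. degree (?f j))"
    using degree_prod_sum_le[of "{2..n}" ?f] by (simp add: comp_def)
  also have "\<dots> \<le> (\<Sum>j\<in>{2..n}. 1)"
    by (intro sum_mono) (simp add: degree_pCons_le)
  finally have "degree (\<Prod>j\<in>{2..n}. ?f j) \<le> n - 1"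
    by simp
  then show ?thesis
    using assms degree_mult_le[of "[:0, 1:]" "\<Prod>j\<in>{2..n}. ?f j"] unfolding x_up_def by simp
qed

lemma x_up_eq_sum:
  assumes "\<forall>i\<le>k. c i \<in> {0, 1}" and "n \<ge> 1"
  shows "x_up n k c = (\<Sum>m=0..n. monom (real_of_int (O_u n k c m)) m)"
proof -
  have "x_up n k c = (\<Sum>m\<le>n. monom (coeff (x_up n k c) m) m)"
    by (rule poly_as_sum_of_monoms'[symmetric]) (rule degree_x_up[OF assms(2)])
  also have "\<dots> = (\<Sum>m=0..n. monom (real_of_int (O_u n k c m)) m)"
    by (simp add: coeff_x_up[OF assms] atLeast0AtMost)
  finally show ?thesis .
qed

lemma x_down_eq_sum:
  assumes "\<forall>i\<le>k. c i \<in> {0, 1}" and "n \<ge> 1"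
  shows "x_down n k c = (\<Sum>m=0..n. monom (real_of_int (O_s n k c m)) m)"
proof (rule poly_ext)
  fix x :: real
  have "poly (x_down n k c) x = (-1) ^ n * poly (x_up n k c) (- x)"
    using assms(2) unfolding x_down_def x_up_def by (subst poly_x_mult_prod_reflect) simp_all
  also have "\<dots> = poly (\<Sum>m=0..n. monom ((-1) ^ (n + m) * real_of_int (O_u n k c m)) m) x"
    unfolding x_up_eq_sum[OF assms] by (rule poly_sum_monom_reflect)
  also have "\<dots> = poly (\<Sum>m=0..n. monom (real_of_int (O_s n k c m)) m) x"
    by (simp add: O_s_def O_u_def)
  finally show "poly (x_down n k c) x = poly (\<Sum>m=0..n. monom (real_of_int (O_s n k c m)) m) x" .
qed

lemma roots_x_up:
  assumes "\<forall>j\<in>{2..n}. F k j (\<lambda>i. real (c i)) \<noteq> 0"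
  shows "{x. poly (x_up n k c) x = 0} =
    insert 0 ((\<lambda>j. - F k j (\<lambda>i. real (compl_C c i)) / F k j (\<lambda>i. real (c i))) ` {2..n})"
proof -
  have "(real j - 1) ^ k \<noteq> 0" if "j \<in> {2..n}" for j
    using that by simp
  then show ?thesis
    unfolding x_up_def using assms
    by (subst roots_x_mult_prod) (auto intro!: image_cong)
qed

lemma roots_x_down:
  assumes "\<forall>j\<in>{2..n}. F k j (\<lambda>i. real (c i)) \<noteq> 0"
  shows "{x. poly (x_down n k c) x = 0} =
    insert 0 ((\<lambda>j. F k j (\<lambda>i. real (compl_C c i)) / F k j (\<lambda>i. real (c i))) ` {2..n})"
proof -
  have "(real j - 1) ^ k \<noteq> 0" if "j \<in> {2..n}" for j
    using that by simp
  then show ?thesis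
    unfolding x_down_def using assms
    by (subst roots_x_mult_prod) (auto intro!: image_cong)
qed

theorem lemma3p4:
  fixes n k :: nat and c :: "nat \<Rightarrow> nat"
  assumes "k \<ge> 1" and "n \<ge> 2"
    and "\<forall>i\<le>k. c i \<in> {0, 1}"
    and "\<exists>i\<le>k. c i \<noteq> 0"
  shows "(x_up n k c = (\<Sum>m=0..n. monom (real_of_int (O_u n k c m)) m)) \<and>
    (x_down n k c = (\<Sum>m=0..n. monom (real_of_int (O_s n k c m)) m)) \<and>
    ({x. poly (x_up n k c) x = 0} =
           insert 0 ((\<lambda>j. - F k j (\<lambda>i. real (compl_C c i)) / F k j (\<lambda>i. real (c i))) ` {2..n})) \<and>
    ({x. poly (x_down n k c) x = 0} =
           insert 0 ((\<lambda>j. F k j (\<lambda>i. real (compl_C c i)) / F k j (\<lambda>i. real (c i))) ` {2..n}))"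
proof -
  have n: "n \<ge> 1"
    using assms(2) by simp
  have "\<forall>j\<in>{2..n}. F k j (\<lambda>i. real (c i)) \<noteq> 0"
    using F_pos[of _ k "\<lambda>i. real (c i)"] assms(4) by fastforce
  then show ?thesis
    using x_up_eq_sum[OF assms(3) n] x_down_eq_sum[OF assms(3) n] roots_x_up roots_x_down
    by blast
qed

end
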